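(* Let $n\geq 8$, let $\mathfrak{X}=\{A_0,A_1,A_2\}$ be a non-symmetric class $2$ association scheme of order $n-1$, let $B_1$ be the $(2n-1)\times(2n-1)$ matrix defined from $A_1$ as in the context, and let $\mathfrak{Y}=\{I_{2n-1},B_1,B_1^T\}$. Then each of the sets $\{1,\dots,n-1\}$, $\{n\}$, $\{n+1,\dots,2n-1\}$ is mapped to itself by every element of $\operatorname{Aut}(\mathfrak{Y})$.
   Context: An association scheme of order $N$ is a set $\{A_0,\dots,A_d\}$ of $N\times N$ $0/1$-matrices such that $A_0=I_N$, $\sum_i A_i=J_N$ (all-ones matrix), each $A_i^T$ is in the set, and each product $A_iA_j$ is a linear combination of the $A_k$. It is non-symmetric of class $2$ if $d=2$ and $A_1^T=A_2\neq A_1$. The automorphism group of $\{A_0,\dots,A_d\}$ is $\{\sigma\in S_N : P_\sigma^TA_iP_\sigma=A_i \text{ for all } i\}$, where $P_\sigma$ is the permutation matrix of $\sigma$. Definition of $B_1$ (indices $1\le i,j\le n-1$): $(B_1)_{i,j}=(A_1)_{ij}$, $(B_1)_{i,n}=0$, $(B_1)_{i,n+j}=(A_0+A_1)_{ij}$; $(B_1)_{n,j}=1$, $(B_1)_{n,n}=0$, $(B_1)_{n,n+j}=0$; $(B_1)_{n+i,j}=(A_1)_{ij}$, $(B_1)_{n+i,n}=1$, $(B_1)_{n+i,n+j}=(A_2)_{ij}$. In block form, $B_1=\begin{bmatrix} A_1 & \mathbf{0} & A_0+A_1\\ \mathbf{1}^T & 0 & \mathbf{0}^T\\ A_1 & \mathbf{1}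 & A_2\end{bmatrix}$ with blocks indexed by $\{1,\dots,n-1\},\{n\},\{n+1,\dots,2n-1\}$. It is a fact that $\mathfrak{Y}$ is a non-symmetric class $2$ association scheme. *)

theory Defs
  imports Complex_Main "HOL-Combinatorics.Permutations"
begin

text \<open>Matrices of order N are modelled as functions nat => nat => real,
  with rows and columns indexed by {1..N}; entries outside are irrelevant.\<close>

type_synonym mat = "nat \<Rightarrow> nat \<Rightarrow> real"

definition mat_eq :: "nat \<Rightarrow> mat \<Rightarrow> mat \<Rightarrow> bool" where
  "mat_eq N M M' \<longleftrightarrow> (\<forall>x\<in>{1..N}. \<forall>y\<in>{1..N}. M x y = M' x y)"

definition mat_transpose :: "mat \<Rightarrow> mat" where
  "mat_transpose M = (\<lambda>x y. M y x)"

definition mat_mult :: "nat \<Rightarrow> mat \<Rightarrow> mat \<Rightarrow> mat" where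
  "mat_mult N M M' = (\<lambda>x y. \<Sum>z\<in>{1..N}. M x z * M' z y)"

definition id_mat :: mat where
  "id_mat = (\<lambda>x y. if x = y then 1 else 0)"

definition association_scheme :: "nat \<Rightarrow> nat \<Rightarrow> (nat \<Rightarrow> mat) \<Rightarrow> bool" where
  "association_scheme N d A \<longleftrightarrow>
     (\<forall>i\<le>d. \<forall>x\<in>{1..N}. \<forall>y\<in>{1..N}. A i x y = 0 \<or> A i x y = 1) \<and>
     mat_eq N (A 0) id_mat \<and>
     (\<forall>x\<in>{1..N}. \<forall>y\<in>{1..N}. (\<Sum>i\<le>d. A i x y) = 1) \<and>
     (\<forall>i\<le>d. \<exists>j\<le>d. mat_eq N (mat_transpose (A i)) (A j)) \<and>
     (\<forall>i\<le>d. \<forall>j\<le>d. \<exists>c :: nat \<Rightarrow> real.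
        mat_eq N (mat_mult N (A i) (A j)) (\<lambda>x y. \<Sum>k\<le>d. c k * A k x y))"

definition nonsym_class2_scheme :: "nat \<Rightarrow> (nat \<Rightarrow> mat) \<Rightarrow> bool" where
  "nonsym_class2_scheme N A \<longleftrightarrow> association_scheme N 2 A \<and>
     mat_eq N (mat_transpose (A 1)) (A 2) \<and> \<not> mat_eq N (A 2) (A 1)"

definition scheme_aut :: "nat \<Rightarrow> nat \<Rightarrow> (nat \<Rightarrow> mat) \<Rightarrow> (nat \<Rightarrow> nat) set" where
  "scheme_aut N d A = {\<sigma>. \<sigma> permutes {1..N} \<and>
     (\<forall>i\<le>d. \<forall>x\<in>{1..N}. \<forall>y\<in>{1..N}. A i (\<sigma> x) (\<sigma> y) = A i x y)}"

definition B1 :: "nat \<Rightarrow> (nat \<Rightarrow> mat) \<Rightarrow> mat" where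
  "B1 n A = (\<lambda>x y.
     if x \<le> n - 1 then
       (if y \<le> n - 1 then A 1 x y else if y = n then 0 else A 0 x (y - n) + A 1 x (y - n))
     else if x = n then
       (if y \<le> n - 1 then 1 else 0)
     else
       (if y \<le> n - 1 then A 1 (x - n) y else if y = n then 1 else A 2 (x - n) (y - n)))"

definition Yscheme :: "nat \<Rightarrow> (nat \<Rightarrow> mat) \<Rightarrow> (nat \<Rightarrow> mat)" where
  "Yscheme n A = (\<lambda>i. if i = 0 then id_mat else if i = 1 then B1 n A else mat_transpose (B1 n A))"

end

theory Submission
  imports Defs
begin

text \<open>
  Read B1 as the adjacency matrix of a digraph on {1..2n-1}. Since A_1 A_1^T is a combination of
  A_0, A_1, A_2, the tournament A_1 on {1..n-1} is doubly regular: every vertex has out-degree k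
  and every arc x -> y has l common out-neighbours.
  Call v in-twinned if each out-neighbour u of v has an in-neighbour w of v with the same
  out-neighbours as u inside the out-neighbourhood of v. The vertex n is in-twinned (take w = n + u).
  A transitive triple i -> j1, i -> j2, j1 -> j2, which exists once n - 1 >= 5, shows that neither i
  nor n + i is: a twin of j1 would either violate antisymmetry or force l = k - 1, and the same triple
  rules out l = k - 1 because the out-neighbourhood of i minus that of j2 contains both j1 and j2.
  Being in-twinned is invariant under automorphisms, so every automorphism fixes n, hence also its
  out-neighbourhood {1..n-1} and its in-neighbourhood {n+1..2n-1}.
\<close>

definition digraph_aut :: "'a set \<Rightarrow> ('a \<Rightarrow> 'a \<Rightarrow> bool) \<Rightarrow> ('a \<Rightarrow> 'a) \<Rightarrow> bool" where
  "digraph_aut V E \<sigma> \<longleftrightarrow> \<sigma> permutes V \<and> (\<forall>x\<in>V. \<forall>y\<in>V. E (\<sigma> x) (\<sigma> y) = E x y)"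

lemma digraph_aut_image:
  assumes "digraph_aut V E \<sigma>" shows "\<sigma> ` V = V"
  using assms permutes_image unfolding digraph_aut_def by blast

lemma digraph_aut_converse: "digraph_aut V E \<sigma> \<Longrightarrow> digraph_aut V (\<lambda>x y. E y x) \<sigma>"
  unfolding digraph_aut_def by blast

lemma digraph_aut_out_neighbours:
  assumes aut: "digraph_aut V E \<sigma>" and v: "v \<in> V"
  shows "\<sigma> ` {u\<in>V. E v u} = {u\<in>V. E (\<sigma> v) u}"
proof -
  have img: "\<sigma> ` V = V" using aut by (rule digraph_aut_image)
  have hom: "E (\<sigma> x) (\<sigma> y) = E x y" if "x \<in> V" "y \<in> V" for x y
    using aut that unfolding digraph_aut_def by blast
  show ?thesis
  proof
    show "\<sigma> ` {u\<in>V. E v u} \<subseteq> {u\<in>V. E (\<sigma> v) u}" using img hom v by blast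
    show "{u\<in>V. E (\<sigma> v) u} \<subseteq> \<sigma> ` {u\<in>V. E v u}"
    proof
      fix u' assume u': "u' \<in> {u\<in>V. E (\<sigma> v) u}"
      then obtain u where "u \<in> V" "u' = \<sigma> u" using img by blast
      then show "u' \<in> \<sigma> ` {u\<in>V. E v u}" using u' hom v by auto
    qed
  qed
qed

lemma digraph_aut_in_neighbours:
  assumes "digraph_aut V E \<sigma>" "v \<in> V"
  shows "\<sigma> ` {u\<in>V. E u v} = {u\<in>V. E u (\<sigma> v)}"
  using digraph_aut_out_neighbours[OF digraph_aut_converse[OF assms(1)] assms(2)] .

definition in_twinned :: "'a set \<Rightarrow> ('a \<Rightarrow> 'a \<Rightarrow> bool) \<Rightarrow> 'a \<Rightarrow> bool" where
  "in_twinned V E v \<longleftrightarrow> (\<forall>u\<in>V. E v u \<longrightarrow>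
     (\<exists>w\<in>V. E w v \<and> (\<forall>y\<in>V. E v y \<longrightarrow> (E u y \<longleftrightarrow> E w y))))"

lemma in_twinned_digraph_aut:
  assumes aut: "digraph_aut V E \<sigma>" and v: "v \<in> V" and tw: "in_twinned V E v"
  shows "in_twinned V E (\<sigma> v)"
  unfolding in_twinned_def
proof (intro ballI impI)
  have img: "\<sigma> ` V = V" using aut by (rule digraph_aut_image)
  have hom: "E (\<sigma> x) (\<sigma> y) = E x y" if "x \<in> V" "y \<in> V" for x y
    using aut that unfolding digraph_aut_def by blast
  fix u' assume u': "u' \<in> V" "E (\<sigma> v) u'"
  obtain u where u: "u \<in> V" "u' = \<sigma> u" using u'(1) img by blast
  have "E v u" using hom u u' v by metis
  then obtain w where w: "w \<in> V" "E w v" and twin: "\<forall>y\<in>V. E v y \<longrightarrow> (E u y \<longleftrightarrow> E w y)"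
    using tw u unfolding in_twinned_def by blast
  show "\<exists>w\<in>V. E w (\<sigma> v) \<and> (\<forall>y\<in>V. E (\<sigma> v) y \<longrightarrow> (E u' y \<longleftrightarrow> E w y))"
  proof (intro bexI[of _ "\<sigma> w"] conjI ballI impI)
    show "E (\<sigma> w) (\<sigma> v)" using hom w v by metis
    show "\<sigma> w \<in> V" using w img by blast
    fix y' assume y': "y' \<in> V" "E (\<sigma> v) y'"
    obtain y where y: "y \<in> V" "y' = \<sigma> y" using y'(1) img by blast
    have "E u y \<longleftrightarrow> E w y" using twin y y' hom v by metis
    then show "E u' y' \<longleftrightarrow> E (\<sigma> w) y'" using hom y u w by metis
  qed
qed

locale doubly_regular_tournament =
  fixes m :: nat and T :: mat and k l :: real
  assumes zero_one: "\<And>x y. x \<in> {1..m} \<Longrightarrow> y \<in> {1..m} \<Longrightarrow> T x y = 0 \<or> T x y = 1"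
    and irreflexive: "\<And>x. x \<in> {1..m} \<Longrightarrow> T x x = 0"
    and tournament: "\<And>x y. x \<in> {1..m} \<Longrightarrow> y \<in> {1..m} \<Longrightarrow> x \<noteq> y \<Longrightarrow> T x y + T y x = 1"
    and out_degree: "\<And>x. x \<in> {1..m} \<Longrightarrow> (\<Sum>z\<in>{1..m}. T x z) = k"
    and common_out_degree: "\<And>x y. x \<in> {1..m} \<Longrightarrow> y \<in> {1..m} \<Longrightarrow> T x y = 1 \<Longrightarrow>
          (\<Sum>z\<in>{1..m}. T x z * T y z) = l"
begin

lemma not_arc_eq_0: "x \<in> {1..m} \<Longrightarrow> y \<in> {1..m} \<Longrightarrow> T x y \<noteq> 1 \<Longrightarrow> T x y = 0"
  using zero_one by blast

lemma arc_antisym: "x \<in> {1..m} \<Longrightarrow> y \<in> {1..m} \<Longrightarrow> T x y = 1 \<Longrightarrow> T y x = 0"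
  using tournament irreflexive by (cases "x = y") force+

lemma not_arc_reverse: "x \<in> {1..m} \<Longrightarrow> y \<in> {1..m} \<Longrightarrow> x \<noteq> y \<Longrightarrow> T x y \<noteq> 1 \<Longrightarrow> T y x = 1"
  using tournament not_arc_eq_0 by force

lemma twice_out_degree:
  assumes "0 < m" shows "2 * k = real m - 1"
proof -
  let ?M = "{1..m}"
  have "(\<Sum>x\<in>?M. \<Sum>z\<in>?M. T x z + T z x) = (\<Sum>x\<in>?M. \<Sum>z\<in>?M. 1 - (if x = z then 1 else 0))"
    by (intro sum.cong refl) (use tournament irreflexive in auto)
  also have "\<dots> = real m * (real m - 1)"
    by (simp add: sum_subtractf)
  finally have pairs: "(\<Sum>x\<in>?M. \<Sum>z\<in>?M. T x z + T z x) = real m * (real m - 1)" .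
  have "(\<Sum>x\<in>?M. \<Sum>z\<in>?M. T x z + T z x) = 2 * (\<Sum>x\<in>?M. \<Sum>z\<in>?M. T x z)"
    by (simp add: sum.distrib sum.swap[of "\<lambda>x z. T z x"])
  also have "\<dots> = real m * (2 * k)" using out_degree by simp
  finally show ?thesis using pairs assms by simp
qed

lemma transitive_triple:
  assumes "5 \<le> m" and i: "i \<in> {1..m}"
  obtains j1 j2 where "j1 \<in> {1..m}" "j2 \<in> {1..m}" "T i j1 = 1" "T i j2 = 1" "T j1 j2 = 1"
proof -
  let ?S = "{z\<in>{1..m}. T i z = 1}"
  have "k = (\<Sum>z\<in>{1..m}. T i z)" using out_degree[OF i] by simp
  also have "\<dots> = (\<Sum>z\<in>?S. T i z)"
    by (rule sum.mono_neutral_right) (use zero_one i in fastforce)+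
  also have "\<dots> = real (card ?S)" by simp
  finally have "card ?S \<ge> 2" using twice_out_degree assms(1) by simp
  then obtain a b where ab: "a \<in> ?S" "b \<in> ?S" "a \<noteq> b"
    using card_le_Suc0_iff_eq[of ?S] by fastforce
  then consider "T a b = 1" | "T b a = 1" using not_arc_reverse by blast
  then show ?thesis using ab that by cases blast+
qed

(* The common out-neighbourhood of j and t is that of t minus i. *)
lemma common_out_degree_eq_pred:
  assumes M: "i \<in> {1..m}" "j \<in> {1..m}" "t \<in> {1..m}"
    and arcs: "T i j = 1" "T t i = 1" "T j t = 1"
    and sub: "\<forall>z\<in>{1..m}. z \<noteq> i \<longrightarrow> T t z = 1 \<longrightarrow> T j z = 1"
  shows "l = k - 1"
proof -
  have "T j z * T t z = T t z - (if z = i then 1 else 0)" if z: "z \<in> {1..m}" for z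
    using arc_antisym[OF M(1,2) arcs(1)] arcs(2) sub z not_arc_eq_0[OF M(3) z]
    by (cases "z = i"; cases "T t z = 1") auto
  then have "(\<Sum>z\<in>{1..m}. T j z * T t z) = (\<Sum>z\<in>{1..m}. T t z) - 1"
    using M(1) by (simp add: sum_subtractf)
  then show ?thesis using common_out_degree[OF M(2,3) arcs(3)] out_degree[OF M(3)] by simp
qed

lemma common_out_degree_ne_pred:
  assumes "5 \<le> m" shows "l \<noteq> k - 1"
proof
  assume l: "l = k - 1"
  have "1 \<in> {1..m}" using assms by simp
  then obtain i where i: "i \<in> {1..m}" by blast
  obtain j1 j2 where j: "j1 \<in> {1..m}" "j2 \<in> {1..m}" "T i j1 = 1" "T i j2 = 1" "T j1 j2 = 1"
    using transitive_triple[OF assms i] by blast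
  have "(\<Sum>z\<in>{1..m}. T i z * (1 - T j2 z)) = k - l"
    using out_degree[OF i] common_out_degree[OF i j(2) j(4)]
    by (simp add: right_diff_distrib sum_subtractf)
  also have "\<dots> = 1" using l by simp
  finally have one: "(\<Sum>z\<in>{1..m}. T i z * (1 - T j2 z)) = 1" .
  have "j1 \<noteq> j2" using j irreflexive by auto
  then have "(\<Sum>z\<in>{j1,j2}. T i z * (1 - T j2 z)) = 2"
    using j arc_antisym[OF j(1,2) j(5)] irreflexive[OF j(2)] by simp
  moreover have "(\<Sum>z\<in>{j1,j2}. T i z * (1 - T j2 z)) \<le> (\<Sum>z\<in>{1..m}. T i z * (1 - T j2 z))"
    by (rule sum_mono2) (use j zero_one[OF i] zero_one[OF j(2)] in fastforce)+
  ultimately show False using one by simp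
qed

end

lemma nonsym_class2_scheme_entries:
  assumes "nonsym_class2_scheme N A" and "x \<in> {1..N}" "y \<in> {1..N}"
  shows "A 1 x y = 0 \<or> A 1 x y = 1"
    and "A 0 x y = (if x = y then 1 else 0)"
    and "A 2 x y = A 1 y x"
    and "A 0 x y + A 1 x y + A 2 x y = 1"
proof -
  have scheme: "association_scheme N 2 A" and tr: "mat_eq N (mat_transpose (A 1)) (A 2)"
    using assms(1) unfolding nonsym_class2_scheme_def by auto
  show "A 1 x y = 0 \<or> A 1 x y = 1" "A 0 x y = (if x = y then 1 else 0)"
    using scheme assms(2,3) unfolding association_scheme_def mat_eq_def id_mat_def by auto
  show "A 2 x y = A 1 y x"
    using tr assms(2,3) unfolding mat_eq_def mat_transpose_def by auto
  have "(\<Sum>i\<le>2. A i x y) = 1" using scheme assms(2,3) unfolding association_scheme_def by auto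
  then show "A 0 x y + A 1 x y + A 2 x y = 1" by (simp add: numeral_2_eq_2 add.commute)
qed

lemma nonsym_class2_scheme_doubly_regular_tournament:
  assumes scheme: "nonsym_class2_scheme N A"
  obtains k l where "doubly_regular_tournament N (A 1) k l"
proof -
  let ?M = "{1..N}"
  note entries = nonsym_class2_scheme_entries[OF scheme]
  have irr: "A 1 x x = 0" if "x \<in> ?M" for x
    using entries[OF that that] by auto
  have tourn: "A 1 x y + A 1 y x = 1" if "x \<in> ?M" "y \<in> ?M" "x \<noteq> y" for x y
    using entries[OF that(1,2)] that(3) by auto
  obtain c where c: "mat_eq N (mat_mult N (A 1) (A 2)) (\<lambda>x y. \<Sum>k\<le>2. c k * A k x y)"
    using scheme unfolding nonsym_class2_scheme_def association_scheme_def by force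
  have common: "(\<Sum>z\<in>?M. A 1 x z * A 1 y z) = c 0 * A 0 x y + c 1 * A 1 x y + c 2 * A 1 y x"
    if "x \<in> ?M" "y \<in> ?M" for x y
  proof -
    have "(\<Sum>z\<in>?M. A 1 x z * A 1 y z) = (\<Sum>z\<in>?M. A 1 x z * A 2 z y)"
      by (intro sum.cong refl) (use entries(3) that in auto)
    also have "\<dots> = (\<Sum>k\<le>2. c k * A k x y)"
      using c that unfolding mat_eq_def mat_mult_def by auto
    finally show ?thesis using entries(3)[OF that] by (simp add: numeral_2_eq_2)
  qed
  show ?thesis
  proof (rule that, unfold_locales)
    show "A 1 x y = 0 \<or> A 1 x y = 1" if "x \<in> ?M" "y \<in> ?M" for x y using entries(1)[OF that] .
    show "A 1 x x = 0" if "x \<in> ?M" for x using irr[OF that] .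
    show "A 1 x y + A 1 y x = 1" if "x \<in> ?M" "y \<in> ?M" "x \<noteq> y" for x y using tourn[OF that] .
    show "(\<Sum>z\<in>?M. A 1 x z) = c 0" if x: "x \<in> ?M" for x
    proof -
      have "(\<Sum>z\<in>?M. A 1 x z) = (\<Sum>z\<in>?M. A 1 x z * A 1 x z)"
        by (intro sum.cong refl) (use entries(1) x in auto)
      then show ?thesis using common[OF x x] entries(2)[OF x x] irr[OF x] by simp
    qed
    show "(\<Sum>z\<in>?M. A 1 x z * A 1 y z) = c 1" if "x \<in> ?M" "y \<in> ?M" "A 1 x y = 1" for x y
      using common[OF that(1,2)] entries(2)[OF that(1,2)] tourn[OF that(1,2)] irr that by fastforce
  qed
qed

locale B1_digraph = doubly_regular_tournament "n - 1" "A 1" k l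
  for n :: nat and A :: "nat \<Rightarrow> mat" and k l +
  assumes A0_id: "\<And>x y. x \<in> {1..n-1} \<Longrightarrow> y \<in> {1..n-1} \<Longrightarrow> A 0 x y = (if x = y then 1 else 0)"
    and A2_transpose: "\<And>x y. x \<in> {1..n-1} \<Longrightarrow> y \<in> {1..n-1} \<Longrightarrow> A 2 x y = A 1 y x"
    and order: "6 \<le> n"
begin

abbreviation B1_arc :: "nat \<Rightarrow> nat \<Rightarrow> bool" where
  "B1_arc x y \<equiv> B1 n A x y = 1"

lemma vertex_cases:
  assumes "v \<in> {1..2*n-1}"
  obtains "v \<in> {1..n-1}" | "v = n" | x where "x \<in> {1..n-1}" "v = n + x"
proof -
  consider "v \<le> n - 1" | "v = n" | "v > n" by linarith
  then show ?thesis
  proof cases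
    case 3
    then have "v - n \<in> {1..n-1}" "v = n + (v - n)" using assms by auto
    then show ?thesis using that(3) by blast
  qed (use assms that in auto)
qed

lemma centre_vertex: "n \<in> {1..2*n-1}"
  using order by simp

lemma low_vertex: "x \<in> {1..n-1} \<Longrightarrow> x \<in> {1..2*n-1}"
  by auto

lemma high_vertex: "x \<in> {1..n-1} \<Longrightarrow> n + x \<in> {1..2*n-1}"
  by auto

lemma B1_arc_low_low: "x \<in> {1..n-1} \<Longrightarrow> y \<in> {1..n-1} \<Longrightarrow> B1_arc x y \<longleftrightarrow> A 1 x y = 1"
  by (auto simp: B1_def)

lemma not_B1_arc_low_centre: "x \<in> {1..n-1} \<Longrightarrow> \<not> B1_arc x n"
  using order by (auto simp: B1_def)

lemma B1_arc_low_high: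
  assumes "x \<in> {1..n-1}" "y \<in> {1..n-1}"
  shows "B1_arc x (n + y) \<longleftrightarrow> x = y \<or> A 1 x y = 1"
  using assms A0_id[OF assms] irreflexive[OF assms(1)] by (cases "x = y") (auto simp: B1_def)

lemma B1_arc_centre_low: "y \<in> {1..n-1} \<Longrightarrow> B1_arc n y"
  using order by (auto simp: B1_def)

lemma not_B1_arc_centre_centre: "\<not> B1_arc n n"
  using order by (auto simp: B1_def)

lemma not_B1_arc_centre_high: "y \<in> {1..n-1} \<Longrightarrow> \<not> B1_arc n (n + y)"
  using order by (auto simp: B1_def)

lemma B1_arc_high_low: "x \<in> {1..n-1} \<Longrightarrow> y \<in> {1..n-1} \<Longrightarrow> B1_arc (n + x) y \<longleftrightarrow> A 1 x y = 1"
  by (auto simp: B1_def)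

lemma B1_arc_high_centre: "x \<in> {1..n-1} \<Longrightarrow> B1_arc (n + x) n"
  by (auto simp: B1_def)

lemma B1_arc_high_high:
  "x \<in> {1..n-1} \<Longrightarrow> y \<in> {1..n-1} \<Longrightarrow> B1_arc (n + x) (n + y) \<longleftrightarrow> A 1 y x = 1"
  using A2_transpose by (auto simp: B1_def)

lemma B1_arc_from_centre_iff: "v \<in> {1..2*n-1} \<Longrightarrow> B1_arc n v \<longleftrightarrow> v \<in> {1..n-1}"
  by (cases rule: vertex_cases)
    (use B1_arc_centre_low not_B1_arc_centre_centre not_B1_arc_centre_high in auto)

lemma B1_arc_to_centre_iff: "v \<in> {1..2*n-1} \<Longrightarrow> B1_arc v n \<longleftrightarrow> v \<in> {n+1..2*n-1}"
  by (cases rule: vertex_cases)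
    (use B1_arc_high_centre not_B1_arc_low_centre not_B1_arc_centre_centre in auto)

lemma transitive_triple_at:
  assumes "i \<in> {1..n-1}"
  obtains j1 j2 where "j1 \<in> {1..n-1}" "j2 \<in> {1..n-1}" "A 1 i j1 = 1" "A 1 i j2 = 1" "A 1 j1 j2 = 1"
  using transitive_triple[OF _ assms] order by force

lemma in_twinned_centre: "in_twinned {1..2*n-1} B1_arc n"
  unfolding in_twinned_def
proof (intro ballI impI)
  fix u assume u: "u \<in> {1..2*n-1}" "B1_arc n u"
  have u_low: "u \<in> {1..n-1}" using u B1_arc_from_centre_iff by blast
  show "\<exists>w\<in>{1..2*n-1}. B1_arc w n \<and> (\<forall>y\<in>{1..2*n-1}. B1_arc n y \<longrightarrow> (B1_arc u y \<longleftrightarrow> B1_arc w y))"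
  proof (intro bexI[of _ "n + u"] conjI ballI impI)
    show "B1_arc (n + u) n" using B1_arc_high_centre u_low .
    fix y assume y: "y \<in> {1..2*n-1}" "B1_arc n y"
    have "y \<in> {1..n-1}" using y B1_arc_from_centre_iff by blast
    then show "B1_arc u y \<longleftrightarrow> B1_arc (n + u) y" using B1_arc_low_low B1_arc_high_low u_low by auto
  qed (use high_vertex u_low in auto)
qed

lemma not_in_twinned_low:
  assumes i: "i \<in> {1..n-1}" shows "\<not> in_twinned {1..2*n-1} B1_arc i"
proof
  assume tw: "in_twinned {1..2*n-1} B1_arc i"
  obtain j1 j2 where j: "j1 \<in> {1..n-1}" "j2 \<in> {1..n-1}" "A 1 i j1 = 1" "A 1 i j2 = 1" "A 1 j1 j2 = 1"
    using transitive_triple_at[OF i] by blast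
  have "B1_arc i j1" using B1_arc_low_low i j by blast
  then obtain w where w: "w \<in> {1..2*n-1}" "B1_arc w i"
    and twin: "\<forall>y\<in>{1..2*n-1}. B1_arc i y \<longrightarrow> (B1_arc j1 y \<longleftrightarrow> B1_arc w y)"
    using tw low_vertex[OF j(1)] unfolding in_twinned_def by blast
  show False
  proof (cases rule: vertex_cases[OF w(1)])
    case 1
    have "A 1 w i = 1" using w B1_arc_low_low 1 i by blast
    then have "B1_arc w (n + i)" "B1_arc i (n + i)" using B1_arc_low_high 1 i by blast+
    moreover have "\<not> B1_arc j1 (n + i)"
      using B1_arc_low_high[OF j(1) i] arc_antisym[OF i j(1) j(3)] j irreflexive i by auto
    ultimately show False using twin high_vertex[OF i] by blast
  next
    case 2
    have "B1_arc i (n + j1)" "B1_arc j1 (n + j1)" using B1_arc_low_high i j by blast+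
    then show False using twin high_vertex[OF j(1)] not_B1_arc_centre_high[OF j(1)] 2 by blast
  next
    case (3 t)
    have "B1_arc i (n + j2)" "B1_arc j1 (n + j2)" using B1_arc_low_high i j by blast+
    then have "B1_arc (n + t) (n + j2)" using twin high_vertex[OF j(2)] 3 by blast
    then have "A 1 j2 t = 1" using B1_arc_high_high 3 j by blast
    moreover have "B1_arc i j2" "B1_arc j1 j2" using B1_arc_low_low i j by blast+
    then have "B1_arc (n + t) j2" using twin low_vertex[OF j(2)] 3 by blast
    then have "A 1 t j2 = 1" using B1_arc_high_low 3 j by blast
    ultimately show False using arc_antisym[OF j(2) 3(1)] by simp
  qed
qed

lemma twin_of_high_dominates:
  assumes i: "i \<in> {1..n-1}" and j: "j \<in> {1..n-1}" "A 1 i j = 1"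
    and w: "w \<in> {1..n-1}" "A 1 w i = 1"
    and twin: "\<forall>y\<in>{1..2*n-1}. B1_arc (n + i) y \<longrightarrow> (B1_arc j y \<longleftrightarrow> B1_arc w y)"
  shows "A 1 j w = 1" and "\<forall>z\<in>{1..n-1}. z \<noteq> i \<longrightarrow> A 1 w z = 1 \<longrightarrow> A 1 j z = 1"
proof -
  have "B1_arc (n + i) (n + w)" "B1_arc w (n + w)" using B1_arc_high_high B1_arc_low_high i w by blast+
  then have "B1_arc j (n + w)" using twin high_vertex[OF w(1)] by blast
  moreover have "j \<noteq> w" using arc_antisym[OF i j] w by auto
  ultimately show "A 1 j w = 1" using B1_arc_low_high j w by blast
  show "\<forall>z\<in>{1..n-1}. z \<noteq> i \<longrightarrow> A 1 w z = 1 \<longrightarrow> A 1 j z = 1"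
  proof (intro ballI impI)
    fix z assume z: "z \<in> {1..n-1}" "z \<noteq> i" "A 1 w z = 1"
    show "A 1 j z = 1"
    proof (cases "A 1 i z = 1")
      case True
      then have "B1_arc (n + i) z" "B1_arc w z" using B1_arc_high_low B1_arc_low_low i z w by blast+
      then show ?thesis using twin low_vertex[OF z(1)] B1_arc_low_low j z by blast
    next
      case False
      then have "A 1 z i = 1" using not_arc_reverse[OF i z(1)] z by auto
      then have "B1_arc (n + i) (n + z)" "B1_arc w (n + z)" using B1_arc_high_high B1_arc_low_high i z w by blast+
      then have "B1_arc j (n + z)" using twin high_vertex[OF z(1)] by blast
      then show ?thesis using B1_arc_low_high j z False by auto
    qed
  qed
qed

lemma not_in_twinned_high:
  assumes i: "i \<in> {1..n-1}" shows "\<not> in_twinned {1..2*n-1} B1_arc (n + i)"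
proof
  assume tw: "in_twinned {1..2*n-1} B1_arc (n + i)"
  obtain j1 j2 where j: "j1 \<in> {1..n-1}" "j2 \<in> {1..n-1}" "A 1 i j1 = 1" "A 1 i j2 = 1" "A 1 j1 j2 = 1"
    using transitive_triple_at[OF i] by blast
  have "B1_arc (n + i) j1" using B1_arc_high_low i j by blast
  then obtain w where w: "w \<in> {1..2*n-1}" "B1_arc w (n + i)"
    and twin: "\<forall>y\<in>{1..2*n-1}. B1_arc (n + i) y \<longrightarrow> (B1_arc j1 y \<longleftrightarrow> B1_arc w y)"
    using tw low_vertex[OF j(1)] unfolding in_twinned_def by blast
  show False
  proof (cases rule: vertex_cases[OF w(1)])
    case 1
    then consider "w = i" | "A 1 w i = 1" using B1_arc_low_high i w by blast
    then show False
    proof cases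
      case 1
      have "B1_arc (n + i) j1" "B1_arc i j1" "\<not> B1_arc j1 j1"
        using B1_arc_high_low B1_arc_low_low i j irreflexive by auto
      then show False using twin low_vertex[OF j(1)] 1 by blast
    next
      case 2
      note dominates = twin_of_high_dominates[OF i j(1) j(3) \<open>w \<in> {1..n-1}\<close> 2 twin]
      have "l = k - 1" using common_out_degree_eq_pred[OF i j(1) \<open>w \<in> {1..n-1}\<close> j(3) 2 dominates] .
      then show False using common_out_degree_ne_pred order by simp
    qed
  next
    case 2
    then show False using w not_B1_arc_centre_high i by blast
  next
    case (3 s)
    have "B1_arc (n + i) n" "B1_arc (n + s) n" "\<not> B1_arc j1 n"
      using B1_arc_high_centre not_B1_arc_low_centre i j 3 by blast+
    then show False using twin centre_vertex 3 by blast
  qed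
qed

lemma in_twinned_iff_centre:
  "v \<in> {1..2*n-1} \<Longrightarrow> in_twinned {1..2*n-1} B1_arc v \<longleftrightarrow> v = n"
  by (cases rule: vertex_cases) (use in_twinned_centre not_in_twinned_low not_in_twinned_high in auto)

lemma digraph_aut_preserves_blocks:
  assumes aut: "digraph_aut {1..2*n-1} B1_arc \<sigma>"
  shows "\<sigma> ` {1..n - 1} = {1..n - 1} \<and> \<sigma> ` {n} = {n} \<and> \<sigma> ` {n + 1..2 * n - 1} = {n + 1..2 * n - 1}"
proof -
  have "\<sigma> ` {1..2*n-1} = {1..2*n-1}" using aut by (rule digraph_aut_image)
  then have centre: "\<sigma> n = n"
    using in_twinned_digraph_aut[OF aut centre_vertex in_twinned_centre] in_twinned_iff_centre centre_vertex
    by blast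
  have low: "{1..n-1} = {u\<in>{1..2*n-1}. B1_arc n u}"
    using B1_arc_from_centre_iff by auto
  have high: "{n+1..2*n-1} = {u\<in>{1..2*n-1}. B1_arc u n}"
    using B1_arc_to_centre_iff by auto
  show ?thesis
    using digraph_aut_out_neighbours[OF aut centre_vertex] digraph_aut_in_neighbours[OF aut centre_vertex]
    unfolding low high by (simp add: centre)
qed

end

theorem lemma2:
  fixes n :: nat and A :: "nat \<Rightarrow> mat"
  assumes "n \<ge> 8"
    and "nonsym_class2_scheme (n - 1) A"
  shows "\<forall>\<sigma>\<in>scheme_aut (2 * n - 1) 2 (Yscheme n A).
           \<sigma> ` {1..n - 1} = {1..n - 1} \<and> \<sigma> ` {n} = {n} \<and> \<sigma> ` {n + 1..2 * n - 1} = {n + 1..2 * n - 1}"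
proof
  fix \<sigma> assume \<sigma>: "\<sigma> \<in> scheme_aut (2 * n - 1) 2 (Yscheme n A)"
  obtain k l where tournament: "doubly_regular_tournament (n - 1) (A 1) k l"
    using nonsym_class2_scheme_doubly_regular_tournament[OF assms(2)] .
  interpret B1_digraph n A k l
    using B1_digraph.intro[of n A k l, OF tournament B1_digraph_axioms.intro]
      nonsym_class2_scheme_entries[OF assms(2)] assms(1) by auto
  have "digraph_aut {1..2*n-1} B1_arc \<sigma>"
    using \<sigma> unfolding scheme_aut_def Yscheme_def digraph_aut_def by (auto dest: spec[of _ 1])
  then show "\<sigma> ` {1..n - 1} = {1..n - 1} \<and> \<sigma> ` {n} = {n} \<and> \<sigma> ` {n + 1..2 * n - 1} = {n + 1..2 * n - 1}"
    by (rule digraph_aut_preserves_blocks)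
qed

end
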